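(* Let $k\in\mathbb{N}$ and let $v=(v_0,\ldots,v_{2k})\in\mathbb{R}^{2k+1}$ be a singular sequence. Then the following statements are equivalent: (1) $v$ is positively recursively generated and $\varphi_0\neq 0$; (2) $v$ is negatively recursively generated and $\psi_{r'-1}\neq 0$, where $r'=\operatorname{rank} v^{(\mathrm{rev})}$; (3) $v$ is recursively generated; (4) $v$ is recursively generated, $\operatorname{rank} v=\operatorname{rank} v^{(\mathrm{rev})}=:r$, $\varphi_0\neq 0$ and $$(\psi_0,\psi_1,\ldots,\psi_{r-2},\psi_{r-1})=\left(-\frac{\varphi_1}{\varphi_0},-\frac{\varphi_2}{\varphi_0},\ldots,-\frac{\varphi_{r-1}}{\varphi_0},\frac{1}{\varphi_0}\right).$$
   Context: For $v=(v_0,\ldots,v_{2k})\in\mathbb{R}^{2k+1}$, $A_v=(v_{i+j})_{i,j=0}^k$ is the associated Hankel matrix, with columns $\mathbf{v_0},\ldots,\mathbf{v_k}$ ($\mathbf{v_j}=(v_{j+\ell})_{\ell=0}^k$). For $0\le m\le k$, $A_v(m)=(v_{i+j})_{i,j=0}^m$ is the upper left $(m+1)\times(m+1)$ corner and $A_v[m]=(v_{i+j})_{i,j=k-m}^k$ the lower right $(m+1)\times(m+1)$ corner. The rank of $v$ is $\operatorname{rank} v=k+1$ if $A_v$ is nonsingular, and otherwise $\operatorname{rank} v=\min\{i:\mathbf{v_i}\in\operatorname{span}\{\mathbf{v_0},\ldots,\mathbf{v_{i-1}}\}\}$; $v$ is singular if $\operatorname{rank} v<k+1$. The reversed sequence is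 $v^{(\mathrm{rev})}=(v_{2k},\ldots,v_0)$. $v$ is positively recursively generated (prg) if, with $r=\operatorname{rank} v$: $A_v(r-1)\succ 0$, and if $r<k+1$, then setting $(\varphi_0,\ldots,\varphi_{r-1})^T:=A_v(r-1)^{-1}(v_r,\ldots,v_{2r-1})^T$, one has $v_j=\varphi_0v_{j-r}+\cdots+\varphi_{r-1}v_{j-1}$ for $j=r,\ldots,2k$. $v$ is negatively recursively generated (nrg) if, with $r=\operatorname{rank} v^{(\mathrm{rev})}$: $A_v[r-1]\succ 0$, and if $r<k+1$, then setting $(\psi_0,\ldots,\psi_{r-1})^T:=A_v[r-1]^{-1}(v_{2k-2r+1},\ldots,v_{2k-r})^T$, one has $v_{2k-r-j}=\psi_0v_{2k-r+1-j}+\cdots+\psi_{r-1}v_{2k-j}$ for $j=0,\ldots,2k-r$. $v$ is recursively generated (rg) if it is both prg and nrg. *)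

theory Defs
  imports "Jordan_Normal_Form.Gauss_Jordan_Elimination" "Jordan_Normal_Form.Determinant"
begin

(* A sequence v = (v_0,...,v_{2k}) in R^{2k+1} is represented as v :: nat => real;
   only the entries v 0, ..., v (2*k) are ever used. *)

definition hankel :: "nat \<Rightarrow> (nat \<Rightarrow> real) \<Rightarrow> real mat" where
  "hankel k v = mat (k+1) (k+1) (\<lambda>(i,j). v (i+j))"

(* upper left corner A_v(m) for m = r-1, i.e. the r x r matrix (v_{i+j})_{i,j=0}^{r-1} *)
definition hankel_ul :: "nat \<Rightarrow> (nat \<Rightarrow> real) \<Rightarrow> real mat" where
  "hankel_ul r v = mat r r (\<lambda>(i,j). v (i+j))"

(* lower right corner A_v[m] for m = r-1, i.e. the r x r matrix (v_{i+j})_{i,j=k-r+1}^{k} *)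
definition hankel_lr :: "nat \<Rightarrow> nat \<Rightarrow> (nat \<Rightarrow> real) \<Rightarrow> real mat" where
  "hankel_lr k r v = mat r r (\<lambda>(i,j). v ((k+1-r) + i + (k+1-r) + j))"

definition col_in_span :: "nat \<Rightarrow> (nat \<Rightarrow> real) \<Rightarrow> nat \<Rightarrow> bool" where
  "col_in_span k v i = (\<exists>c :: nat \<Rightarrow> real. \<forall>l\<le>k. v (i+l) = (\<Sum>j<i. c j * v (j+l)))"

definition hrank :: "nat \<Rightarrow> (nat \<Rightarrow> real) \<Rightarrow> nat" where
  "hrank k v = (if det (hankel k v) \<noteq> 0 then k+1 else (LEAST i. col_in_span k v i))"

definition singular_seq :: "nat \<Rightarrow> (nat \<Rightarrow> real) \<Rightarrow> bool" where
  "singular_seq k v = (hrank k v < k+1)"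

definition rev_seq :: "nat \<Rightarrow> (nat \<Rightarrow> real) \<Rightarrow> (nat \<Rightarrow> real)" where
  "rev_seq k v = (\<lambda>i. v (2*k - i))"

definition pos_def :: "nat \<Rightarrow> real mat \<Rightarrow> bool" where
  "pos_def n A = (A \<in> carrier_mat n n \<and>
     (\<forall>x \<in> carrier_vec n. x \<noteq> 0\<^sub>v n \<longrightarrow> x \<bullet> (A *\<^sub>v x) > 0))"

(* (phi_0,...,phi_{r-1}) = A_v(r-1)^{-1} (v_r,...,v_{2r-1}), r = rank v; phi_j = 0 for j >= r *)
definition phi :: "nat \<Rightarrow> (nat \<Rightarrow> real) \<Rightarrow> nat \<Rightarrow> real" where
  "phi k v j = (let r = hrank k v; B = the (mat_inverse (hankel_ul r v)) in
     if j < r then (\<Sum>l<r. B $$ (j,l) * v (r + l)) else 0)"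

(* (psi_0,...,psi_{r-1}) = A_v[r-1]^{-1} (v_{2k-2r+1},...,v_{2k-r}), r = rank v^(rev);
   psi_j = 0 for j >= r *)
definition psi :: "nat \<Rightarrow> (nat \<Rightarrow> real) \<Rightarrow> nat \<Rightarrow> real" where
  "psi k v j = (let r = hrank k (rev_seq k v); B = the (mat_inverse (hankel_lr k r v)) in
     if j < r then (\<Sum>l<r. B $$ (j,l) * v (2*k + 1 - 2*r + l)) else 0)"

definition prg :: "nat \<Rightarrow> (nat \<Rightarrow> real) \<Rightarrow> bool" where
  "prg k v = (let r = hrank k v in
     pos_def r (hankel_ul r v) \<and>
     (r < k+1 \<longrightarrow> (\<forall>j. r \<le> j \<and> j \<le> 2*k \<longrightarrow>
        v j = (\<Sum>i<r. phi k v i * v (j - r + i)))))"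

definition nrg :: "nat \<Rightarrow> (nat \<Rightarrow> real) \<Rightarrow> bool" where
  "nrg k v = (let r = hrank k (rev_seq k v) in
     pos_def r (hankel_lr k r v) \<and>
     (r < k+1 \<longrightarrow> (\<forall>j. j \<le> 2*k - r \<longrightarrow>
        v (2*k - r - j) = (\<Sum>i<r. psi k v i * v (2*k - r + 1 - j + i)))))"

definition rg :: "nat \<Rightarrow> (nat \<Rightarrow> real) \<Rightarrow> bool" where
  "rg k v = (prg k v \<and> nrg k v)"

end

theory Submission
  imports Defs
begin

text \<open>
  Let \<open>r = rank v\<close> and let \<open>H s\<close> be the \<open>r \<times> r\<close> Hankel block
  \<open>(v (2s + i + j))\<close>, \<open>i, j < r\<close>; thus \<open>A\<^sub>v(r-1) = H 0\<close> and
  \<open>A\<^sub>v[r-1] = H (k+1-r)\<close>. If \<open>v\<close> obeys the recursion with coefficients \<open>\<phi>\<close>,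
  then \<open>H (s+1) = C\<^sup>T H s C\<close> for the companion matrix \<open>C\<close> of \<open>\<phi>\<close>, which is
  invertible exactly when \<open>\<phi>\<^sub>0 \<noteq> 0\<close>. In that case positivity of \<open>H 0\<close>
  propagates to \<open>H (k+1-r)\<close>, and the recursion runs backwards with the coefficients
  \<open>(-\<phi>\<^sub>1/\<phi>\<^sub>0, \<dots>, -\<phi>\<^sub>r\<^sub>-\<^sub>1/\<phi>\<^sub>0, 1/\<phi>\<^sub>0)\<close>; positive definiteness of
  \<open>H (k+1-r)\<close> then forces \<open>rank v\<^sup>(\<^sup>r\<^sup>e\<^sup>v\<^sup>) = r\<close> and these coefficients to be
  the \<open>\<psi>\<^sub>i\<close>. The converse runs the same argument downwards.

  Finally, a positive definite Hankel block of size \<open>m + 1\<close> admits no recursion of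
  length \<open>m\<close>. For \<open>v\<close> rg, the backward recursion of length
  \<open>r' = rank v\<^sup>(\<^sup>r\<^sup>e\<^sup>v\<^sup>)\<close> on \<open>A\<^sub>v(r-1)\<close> thus gives \<open>r \<le> r'\<close>, and if
  \<open>\<phi>\<^sub>0 = 0\<close> the forward recursion would have length \<open>r - 1\<close> on the block
  \<open>H (k+1-r)\<close> of \<open>A\<^sub>v[r'-1]\<close>.
\<close>

lemma mat_mult_vec_index_sum:
  assumes "x \<in> carrier_vec n" and "a < n"
  shows "(mat n n (\<lambda>(i,j). f i j) *\<^sub>v x) $ a = (\<Sum>b<n. f a b * x $ b)"
  using assms by (auto simp: mult_mat_vec_def scalar_prod_def atLeast0LessThan intro!: sum.cong)

lemma scalar_prod_mat_mult_vec_sum: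
  assumes "x \<in> carrier_vec n"
  shows "x \<bullet> (mat n n (\<lambda>(i,j). f i j) *\<^sub>v x) = (\<Sum>a<n. \<Sum>b<n. x $ a * f a b * x $ b)"
  using assms by (auto simp: scalar_prod_def mult_mat_vec_def sum_distrib_left atLeast0LessThan
      mult.assoc mult.commute mult.left_commute intro!: sum.cong)

lemma pos_def_mat_iff:
  "pos_def n (mat n n (\<lambda>(i,j). f i j)) \<longleftrightarrow>
    (\<forall>x. (\<exists>i<n. x i \<noteq> 0) \<longrightarrow> 0 < (\<Sum>a<n. \<Sum>b<n. x a * f a b * x b))"
proof
  assume pd: "pos_def n (mat n n (\<lambda>(i,j). f i j))"
  show "\<forall>x. (\<exists>i<n. x i \<noteq> 0) \<longrightarrow> 0 < (\<Sum>a<n. \<Sum>b<n. x a * f a b * x b)"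
  proof (intro allI impI)
    fix x :: "nat \<Rightarrow> real"
    assume "\<exists>i<n. x i \<noteq> 0"
    then have "vec n x \<noteq> 0\<^sub>v n"
      by (metis index_vec index_zero_vec(1))
    then have "0 < vec n x \<bullet> (mat n n (\<lambda>(i,j). f i j) *\<^sub>v vec n x)"
      using pd by (simp add: pos_def_def)
    then show "0 < (\<Sum>a<n. \<Sum>b<n. x a * f a b * x b)"
      by (simp add: scalar_prod_mat_mult_vec_sum)
  qed
next
  assume pd: "\<forall>x. (\<exists>i<n. x i \<noteq> 0) \<longrightarrow> 0 < (\<Sum>a<n. \<Sum>b<n. x a * f a b * x b)"
  show "pos_def n (mat n n (\<lambda>(i,j). f i j))"
    unfolding pos_def_def
  proof (intro conjI ballI impI)
    fix x :: "real vec"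
    assume x: "x \<in> carrier_vec n" "x \<noteq> 0\<^sub>v n"
    have "\<exists>i<n. x $ i \<noteq> 0"
    proof (rule ccontr)
      assume "\<not> (\<exists>i<n. x $ i \<noteq> 0)"
      then have "x = 0\<^sub>v n"
        using x(1) by (intro eq_vecI) auto
      with x(2) show False
        by simp
    qed
    then have "0 < (\<Sum>a<n. \<Sum>b<n. x $ a * f a b * x $ b)"
      using pd[rule_format, of "\<lambda>i. x $ i"] by blast
    then show "0 < x \<bullet> (mat n n (\<lambda>(i,j). f i j) *\<^sub>v x)"
      using scalar_prod_mat_mult_vec_sum[OF x(1)] by simp
  qed simp
qed

lemma det_mat_eq_0I:
  fixes f :: "nat \<Rightarrow> nat \<Rightarrow> real"
  assumes "i < n" "x i \<noteq> 0" and kernel: "\<And>a. a < n \<Longrightarrow> (\<Sum>b<n. f a b * x b) = 0"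
  shows "det (mat n n (\<lambda>(i,j). f i j)) = 0"
proof -
  have "vec n x \<noteq> 0\<^sub>v n"
    using assms(1,2) by (metis index_vec index_zero_vec(1))
  moreover have "mat n n (\<lambda>(i,j). f i j) *\<^sub>v vec n x = 0\<^sub>v n"
  proof (rule eq_vecI)
    fix a
    assume "a < dim_vec (0\<^sub>v n)"
    then show "(mat n n (\<lambda>(i,j). f i j) *\<^sub>v vec n x) $ a = 0\<^sub>v n $ a"
      using kernel mat_mult_vec_index_sum[of "vec n x" n a f] by simp
  qed simp
  ultimately show ?thesis
    using det_0_iff_vec_prod_zero_field[OF mat_carrier] vec_carrier by blast
qed

lemma pos_def_det_nonzero:
  assumes "pos_def n A"
  shows "det A \<noteq> 0"
proof
  assume "det A = 0"
  moreover have "A \<in> carrier_mat n n"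
    using assms by (simp add: pos_def_def)
  ultimately obtain x where x: "x \<in> carrier_vec n" "x \<noteq> 0\<^sub>v n" "A *\<^sub>v x = 0\<^sub>v n"
    using det_0_iff_vec_prod_zero_field by blast
  then have "0 < x \<bullet> (A *\<^sub>v x)"
    using assms unfolding pos_def_def by blast
  with x show False
    by simp
qed

lemma pos_def_mat_inverse:
  assumes "pos_def n A"
  obtains B where "mat_inverse A = Some B" "A * B = 1\<^sub>m n" "B \<in> carrier_mat n n"
proof -
  have A: "A \<in> carrier_mat n n"
    using assms by (simp add: pos_def_def)
  then have "mat_inverse A \<noteq> None"
    using mat_inverse(1) det_non_zero_imp_unit pos_def_det_nonzero[OF assms] by metis
  then obtain B where "mat_inverse A = Some B"
    by blast
  with mat_inverse(2)[OF A this] that show thesis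
    by blast
qed

subsection \<open>Positive definite Hankel blocks\<close>

definition hankel_block :: "(nat \<Rightarrow> real) \<Rightarrow> nat \<Rightarrow> nat \<Rightarrow> real mat" where
  "hankel_block v s n = mat n n (\<lambda>(i,j). v (s + i + s + j))"

definition hankel_form :: "(nat \<Rightarrow> real) \<Rightarrow> nat \<Rightarrow> nat \<Rightarrow> (nat \<Rightarrow> real) \<Rightarrow> real" where
  "hankel_form v s n x = (\<Sum>a<n. \<Sum>b<n. x a * v (s + a + s + b) * x b)"

lemma hankel_eq_block: "hankel k v = hankel_block v 0 (k + 1)"
  by (simp add: hankel_def hankel_block_def)

lemma hankel_ul_eq_block: "hankel_ul r v = hankel_block v 0 r"
  by (simp add: hankel_ul_def hankel_block_def)

lemma hankel_lr_eq_block: "hankel_lr k r v = hankel_block v (k + 1 - r) r"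
  by (simp add: hankel_lr_def hankel_block_def)

lemma hankel_form_cong:
  "(\<And>i. i < n \<Longrightarrow> x i = y i) \<Longrightarrow> hankel_form v s n x = hankel_form v s n y"
  unfolding hankel_form_def by (intro sum.cong refl) auto

lemma pos_def_hankel_block_iff:
  "pos_def n (hankel_block v s n) \<longleftrightarrow> (\<forall>x. (\<exists>i<n. x i \<noteq> 0) \<longrightarrow> 0 < hankel_form v s n x)"
  unfolding hankel_block_def hankel_form_def pos_def_mat_iff ..

lemma pos_def_hankel_block_kernel:
  assumes pd: "pos_def n (hankel_block v s n)"
    and kernel: "\<And>a. a < n \<Longrightarrow> (\<Sum>b<n. v (s + a + s + b) * x b) = 0"
  shows "\<forall>i<n. x i = 0"
proof (rule ccontr)
  assume "\<not> (\<forall>i<n. x i = 0)"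
  then have "0 < hankel_form v s n x"
    using pd by (auto simp: pos_def_hankel_block_iff)
  moreover have "hankel_form v s n x = (\<Sum>a<n. x a * (\<Sum>b<n. v (s + a + s + b) * x b))"
    unfolding hankel_form_def by (simp add: sum_distrib_left mult.assoc)
  ultimately show False
    using kernel by simp
qed

lemma pos_def_hankel_block_solution_unique:
  assumes pd: "pos_def n (hankel_block v s n)"
    and x: "\<And>a. a < n \<Longrightarrow> (\<Sum>j<n. v (s + a + s + j) * x j) = c a"
    and y: "\<And>a. a < n \<Longrightarrow> (\<Sum>j<n. v (s + a + s + j) * y j) = c a"
    and "i < n"
  shows "x i = y i"
  using pos_def_hankel_block_kernel[OF pd, of "\<lambda>j. x j - y j"] x y \<open>i < n\<close>
  by (simp add: right_diff_distrib sum_subtractf)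

lemma pos_def_hankel_block_mat_inverse_solves:
  assumes pd: "pos_def n (hankel_block v s n)" and "a < n"
  shows "(\<Sum>j<n. v (s + a + s + j) *
           (\<Sum>l<n. the (mat_inverse (hankel_block v s n)) $$ (j,l) * c l)) = c a"
proof -
  let ?A = "hankel_block v s n"
  obtain B where B: "mat_inverse ?A = Some B" "?A * B = 1\<^sub>m n" "B \<in> carrier_mat n n"
    using pos_def_mat_inverse[OF pd] .
  have A: "?A \<in> carrier_mat n n"
    by (simp add: hankel_block_def)
  have "?A *\<^sub>v (B *\<^sub>v vec n c) = vec n c"
    using A B by (metis assoc_mult_mat_vec one_mult_mat_vec vec_carrier)
  then have "(?A *\<^sub>v (B *\<^sub>v vec n c)) $ a = c a"
    using \<open>a < n\<close> by simp
  moreover have "(?A *\<^sub>v (B *\<^sub>v vec n c)) $ a =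
      (\<Sum>j<n. v (s + a + s + j) * (\<Sum>l<n. B $$ (j,l) * c l))"
    using \<open>a < n\<close> B(3) unfolding hankel_block_def
    by (auto simp: mult_mat_vec_def scalar_prod_def atLeast0LessThan intro!: sum.cong)
  ultimately show ?thesis
    using B(1) by simp
qed

lemma sum_lessThan_if_interval:
  fixes g :: "nat \<Rightarrow> real"
  assumes "d + m \<le> n"
  shows "(\<Sum>b<n. if d \<le> b \<and> b < d + m then g b else 0) = (\<Sum>b<m. g (b + d))"
proof -
  have "(\<Sum>b<n. if d \<le> b \<and> b < d + m then g b else 0) = (\<Sum>b\<in>{d..<d + m}. g b)"
    using assms by (intro sum.mono_neutral_cong_right) auto
  also have "\<dots> = (\<Sum>b<m. g (b + d))"
    using sum.shift_bounds_nat_ivl[of g 0 d m] by (simp add: atLeast0LessThan add.commute)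
  finally show ?thesis .
qed

lemma pos_def_hankel_block_sub:
  assumes pd: "pos_def n (hankel_block v s n)" and "d + m \<le> n"
  shows "pos_def m (hankel_block v (s + d) m)"
  unfolding pos_def_hankel_block_iff
proof (intro allI impI)
  fix x :: "nat \<Rightarrow> real"
  assume "\<exists>i<m. x i \<noteq> 0"
  define x' where "x' b = (if d \<le> b \<and> b < d + m then x (b - d) else 0)" for b
  obtain i where "i < m" "x i \<noteq> 0"
    using \<open>\<exists>i<m. x i \<noteq> 0\<close> by blast
  then have "\<exists>i<n. x' i \<noteq> 0"
    using \<open>d + m \<le> n\<close> by (intro exI[of _ "i + d"]) (simp add: x'_def)
  then have "0 < hankel_form v s n x'"
    using pd by (simp add: pos_def_hankel_block_iff)
  also have "hankel_form v s n x' =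
      (\<Sum>a<n. if d \<le> a \<and> a < d + m then
         (\<Sum>b<n. if d \<le> b \<and> b < d + m then x (a - d) * v (s + a + s + b) * x (b - d) else 0) else 0)"
    unfolding hankel_form_def x'_def by (auto intro!: sum.cong)
  also have "\<dots> = hankel_form v (s + d) m x"
    unfolding hankel_form_def using \<open>d + m \<le> n\<close>
    by (simp add: sum_lessThan_if_interval ac_simps)
  finally show "0 < hankel_form v (s + d) m x" .
qed

lemma pos_def_hankel_block_rev:
  assumes pd: "pos_def r (hankel_block v (k + 1 - r) r)" and "r \<le> k + 1"
  shows "pos_def r (hankel_block (rev_seq k v) 0 r)"
  unfolding pos_def_hankel_block_iff
proof (intro allI impI)
  fix x :: "nat \<Rightarrow> real"
  assume "\<exists>i<r. x i \<noteq> 0"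
  define x' where "x' i = x (r - Suc i)" for i
  obtain i where "i < r" "x i \<noteq> 0"
    using \<open>\<exists>i<r. x i \<noteq> 0\<close> by blast
  moreover have "r - Suc (r - Suc i) = i"
    using \<open>i < r\<close> by auto
  ultimately have "\<exists>i<r. x' i \<noteq> 0"
    by (intro exI[of _ "r - Suc i"]) (simp add: x'_def)
  then have "0 < hankel_form v (k + 1 - r) r x'"
    using pd by (simp add: pos_def_hankel_block_iff)
  also have "hankel_form v (k + 1 - r) r x' =
      (\<Sum>a<r. \<Sum>b<r. x' (r - Suc a) * v (k + 1 - r + (r - Suc a) + (k + 1 - r) + (r - Suc b)) *
        x' (r - Suc b))"
    unfolding hankel_form_def
    by (subst sum.nat_diff_reindex[symmetric]) (intro sum.cong refl sum.nat_diff_reindex[symmetric])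
  also have "\<dots> = hankel_form (rev_seq k v) 0 r x"
    unfolding hankel_form_def x'_def rev_seq_def
  proof (intro sum.cong refl)
    fix a b
    assume "a \<in> {..<r}" "b \<in> {..<r}"
    then have "r - Suc (r - Suc a) = a" "r - Suc (r - Suc b) = b"
      "k + 1 - r + (r - Suc a) + (k + 1 - r) + (r - Suc b) = 2*k - (0 + a + 0 + b)"
      using \<open>r \<le> k + 1\<close> by auto
    then show "x (r - Suc (r - Suc a)) * v (k + 1 - r + (r - Suc a) + (k + 1 - r) + (r - Suc b)) *
        x (r - Suc (r - Suc b)) = x a * v (2*k - (0 + a + 0 + b)) * x b"
      by (simp only:)
  qed
  finally show "0 < hankel_form (rev_seq k v) 0 r x" .
qed

lemma not_pos_def_hankel_block_if_fwd_rec: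
  assumes "\<And>a. a \<le> m \<Longrightarrow> v (s + a + s + m) = (\<Sum>b<m. c b * v (s + a + s + b))"
  shows "\<not> pos_def (Suc m) (hankel_block v s (Suc m))"
proof
  assume pd: "pos_def (Suc m) (hankel_block v s (Suc m))"
  have "\<forall>b<Suc m. (if b < m then - c b else 1) = (0::real)"
    using assms by (intro pos_def_hankel_block_kernel[OF pd]) (simp add: sum_negf mult.commute)
  then show False
    by auto
qed

lemma not_pos_def_hankel_block_if_bwd_rec:
  assumes "\<And>a. a \<le> m \<Longrightarrow> v (s + a + s) = (\<Sum>b<m. c b * v (s + a + s + 1 + b))"
  shows "\<not> pos_def (Suc m) (hankel_block v s (Suc m))"
proof
  assume pd: "pos_def (Suc m) (hankel_block v s (Suc m))"
  have "\<forall>b<Suc m. (if b = 0 then 1 else - c (b - 1)) = (0::real)"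
    using assms by (intro pos_def_hankel_block_kernel[OF pd])
      (simp add: sum.lessThan_Suc_shift sum_negf mult.commute del: sum.lessThan_Suc)
  then show False
    by auto
qed

subsection \<open>Linear recursions\<close>

definition fwd_rec :: "nat \<Rightarrow> (nat \<Rightarrow> real) \<Rightarrow> nat \<Rightarrow> (nat \<Rightarrow> real) \<Rightarrow> bool" where
  "fwd_rec k v r f \<longleftrightarrow> (\<forall>j. r \<le> j \<and> j \<le> 2*k \<longrightarrow> v j = (\<Sum>i<r. f i * v (j - r + i)))"

definition bwd_rec :: "nat \<Rightarrow> (nat \<Rightarrow> real) \<Rightarrow> nat \<Rightarrow> (nat \<Rightarrow> real) \<Rightarrow> bool" where
  "bwd_rec k v r g \<longleftrightarrow> (\<forall>m. m \<le> 2*k - r \<longrightarrow> v m = (\<Sum>i<r. g i * v (m + 1 + i)))"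

lemma fwd_rec_cong:
  assumes "\<And>i. i < r \<Longrightarrow> f i = f' i"
  shows "fwd_rec k v r f \<longleftrightarrow> fwd_rec k v r f'"
proof -
  have "(\<Sum>i<r. f i * w i) = (\<Sum>i<r. f' i * w i)" for w :: "nat \<Rightarrow> real"
    using assms by (intro sum.cong) auto
  then show ?thesis
    by (simp only: fwd_rec_def)
qed

lemma bwd_rec_cong:
  assumes "\<And>i. i < r \<Longrightarrow> g i = g' i"
  shows "bwd_rec k v r g \<longleftrightarrow> bwd_rec k v r g'"
proof -
  have "(\<Sum>i<r. g i * w i) = (\<Sum>i<r. g' i * w i)" for w :: "nat \<Rightarrow> real"
    using assms by (intro sum.cong) auto
  then show ?thesis
    by (simp only: bwd_rec_def)
qed

lemma fwd_rec_imp_bwd_rec: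
  assumes rec: "fwd_rec k v r f" and "1 \<le> r" "f 0 \<noteq> 0" "r \<le> k"
  shows "bwd_rec k v r (\<lambda>i. if i + 1 < r then - f (i + 1) / f 0 else 1 / f 0)"
  unfolding bwd_rec_def
proof (intro allI impI)
  fix m
  assume m: "m \<le> 2*k - r"
  obtain r0 where r0: "r = Suc r0"
    using \<open>1 \<le> r\<close> by (cases r) auto
  have "v (m + r) = (\<Sum>i<r. f i * v (m + r - r + i))"
    using rec m \<open>r \<le> k\<close> unfolding fwd_rec_def by auto
  also have "\<dots> = f 0 * v m + (\<Sum>i<r0. f (Suc i) * v (m + 1 + i))"
    using r0 by (simp add: sum.lessThan_Suc_shift del: sum.lessThan_Suc)
  finally have "v (m + r) = f 0 * v m + (\<Sum>i<r0. f (Suc i) * v (m + 1 + i))" .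
  moreover have "(\<Sum>i<r. (if i + 1 < r then - f (i + 1) / f 0 else 1 / f 0) * v (m + 1 + i))
      = - (\<Sum>i<r0. f (Suc i) * v (m + 1 + i)) / f 0 + v (m + r) / f 0"
    using r0 by (simp add: sum_divide_distrib sum_negf[symmetric])
  ultimately show "v m = (\<Sum>i<r. (if i + 1 < r then - f (i + 1) / f 0 else 1 / f 0) * v (m + 1 + i))"
    using \<open>f 0 \<noteq> 0\<close> by (simp add: field_simps)
qed

lemma bwd_rec_imp_fwd_rec:
  assumes rec: "bwd_rec k v r g" and "1 \<le> r" "g (r - 1) \<noteq> 0" "r \<le> k"
  shows "fwd_rec k v r (\<lambda>i. if i = 0 then 1 / g (r - 1) else - g (i - 1) / g (r - 1))"
  unfolding fwd_rec_def
proof (intro allI impI)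
  fix j
  assume j: "r \<le> j \<and> j \<le> 2*k"
  obtain r0 where r0: "r = Suc r0"
    using \<open>1 \<le> r\<close> by (cases r) auto
  define m where "m = j - r"
  have "j = m + r"
    using j by (simp add: m_def)
  have "v m = (\<Sum>i<r. g i * v (m + 1 + i))"
    using rec j unfolding bwd_rec_def m_def by auto
  also have "\<dots> = (\<Sum>i<r0. g i * v (m + 1 + i)) + g r0 * v j"
    using r0 \<open>j = m + r\<close> by simp
  finally have m_rec: "v m = (\<Sum>i<r0. g i * v (m + 1 + i)) + g r0 * v j" .
  have "(\<Sum>i<r. (if i = 0 then 1 / g (r - 1) else - g (i - 1) / g (r - 1)) * v (j - r + i))
      = 1 / g r0 * v m + (\<Sum>i<r0. (- g i / g r0) * v (m + 1 + i))"
    using r0 by (simp add: sum.lessThan_Suc_shift m_def del: sum.lessThan_Suc)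
  also have "\<dots> = (v m - (\<Sum>i<r0. g i * v (m + 1 + i))) / g r0"
    by (simp add: sum_divide_distrib sum_negf[symmetric] diff_divide_distrib)
  also have "\<dots> = v j"
    using m_rec \<open>g (r - 1) \<noteq> 0\<close> r0 by simp
  finally show "v j =
      (\<Sum>i<r. (if i = 0 then 1 / g (r - 1) else - g (i - 1) / g (r - 1)) * v (j - r + i))"
    by (rule sym)
qed

lemma bwd_rec_imp_fwd_rec_rev:
  assumes "bwd_rec k v r g"
  shows "fwd_rec k (rev_seq k v) r (\<lambda>j. g (r - 1 - j))"
  unfolding fwd_rec_def
proof (intro allI impI)
  fix j
  assume j: "r \<le> j \<and> j \<le> 2*k"
  have "2*k - j \<le> 2*k - r"
    using j by (intro diff_le_mono2) simp
  then have "rev_seq k v j = (\<Sum>i<r. g i * v (2*k - j + 1 + i))"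
    using assms unfolding bwd_rec_def rev_seq_def by blast
  also have "\<dots> = (\<Sum>i<r. g (r - 1 - (r - Suc i)) * v (2*k - (j - r + (r - Suc i))))"
  proof (intro sum.cong refl)
    fix i
    assume "i \<in> {..<r}"
    then have "r - 1 - (r - Suc i) = i" "2*k - (j - r + (r - Suc i)) = 2*k - j + 1 + i"
      using j by auto
    then show "g i * v (2*k - j + 1 + i) =
        g (r - 1 - (r - Suc i)) * v (2*k - (j - r + (r - Suc i)))"
      by (simp only:)
  qed
  also have "\<dots> = (\<Sum>i<r. g (r - 1 - i) * rev_seq k v (j - r + i))"
    unfolding rev_seq_def
    by (rule sum.nat_diff_reindex[where g = "\<lambda>i. g (r - 1 - i) * v (2*k - (j - r + i))"])
  finally show "rev_seq k v j = (\<Sum>i<r. g (r - 1 - i) * rev_seq k v (j - r + i))" .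
qed

text \<open>
  \<open>companion r f\<close> is the transposed companion matrix of the recursion with
  coefficients \<open>f\<close>: shifting an \<open>r \<times> r\<close> Hankel block one step along the
  diagonal transforms its quadratic form by this map.
\<close>

definition companion :: "nat \<Rightarrow> (nat \<Rightarrow> real) \<Rightarrow> (nat \<Rightarrow> real) \<Rightarrow> nat \<Rightarrow> real" where
  "companion r f x j = (if j = 0 then 0 else x (j - 1)) + x (r - 1) * f j"

lemma fwd_rec_sum_Suc:
  assumes rec: "fwd_rec k v r f" and "1 \<le> r" "p + r \<le> 2*k"
  shows "(\<Sum>j<r. x j * v (p + 1 + j)) = (\<Sum>j<r. companion r f x j * v (p + j))"
proof -
  obtain r0 where r0: "r = Suc r0"
    using \<open>1 \<le> r\<close> by (cases r) auto
  have "v (p + r) = (\<Sum>i<r. f i * v (p + i))"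
    using rec \<open>p + r \<le> 2*k\<close> unfolding fwd_rec_def by (auto dest: spec[of _ "p + r"])
  then have "(\<Sum>j<r. x j * v (p + 1 + j)) =
      (\<Sum>j<r0. x j * v (p + 1 + j)) + x r0 * (\<Sum>i<r. f i * v (p + i))"
    using r0 by simp
  also have "\<dots> = (\<Sum>j<r. (if j = 0 then 0 else x (j - 1)) * v (p + j)) +
      (\<Sum>j<r. x (r - 1) * f j * v (p + j))"
    using r0 by (simp add: sum.lessThan_Suc_shift sum_distrib_left distrib_left mult.assoc
        del: sum.lessThan_Suc)
  also have "\<dots> = (\<Sum>j<r. companion r f x j * v (p + j))"
    unfolding companion_def by (simp add: sum.distrib[symmetric] algebra_simps)
  finally show ?thesis .
qed

lemma sum_mult_sum_swap:
  fixes x y :: "nat \<Rightarrow> real"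
  shows "(\<Sum>a<r. x a * (\<Sum>b<r. y b * w a b)) = (\<Sum>b<r. y b * (\<Sum>a<r. x a * w a b))"
  unfolding sum_distrib_left by (subst sum.swap) (simp add: mult.left_commute)

lemma hankel_form_Suc_companion:
  assumes rec: "fwd_rec k v r f" and "1 \<le> r" "s + r \<le> k"
  shows "hankel_form v (s + 1) r x = hankel_form v s r (companion r f x)"
proof -
  let ?C = "companion r f x"
  have "hankel_form v (s + 1) r x = (\<Sum>a<r. x a * (\<Sum>b<r. x b * v ((s + 1 + a + s) + 1 + b)))"
    unfolding hankel_form_def by (intro sum.cong refl) (simp add: sum_distrib_left ac_simps)
  also have "\<dots> = (\<Sum>a<r. x a * (\<Sum>b<r. ?C b * v ((s + 1 + a + s) + b)))"
  proof (intro sum.cong refl)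
    fix a
    assume "a \<in> {..<r}"
    then have "(s + 1 + a + s) + r \<le> 2*k"
      using \<open>s + r \<le> k\<close> by auto
    then show "x a * (\<Sum>b<r. x b * v ((s + 1 + a + s) + 1 + b)) =
        x a * (\<Sum>b<r. ?C b * v ((s + 1 + a + s) + b))"
      using fwd_rec_sum_Suc[OF rec \<open>1 \<le> r\<close>, of "s + 1 + a + s" x] by simp
  qed
  also have "\<dots> = (\<Sum>b<r. ?C b * (\<Sum>a<r. x a * v ((s + 1 + a + s) + b)))"
    by (rule sum_mult_sum_swap)
  also have "\<dots> = (\<Sum>b<r. ?C b * (\<Sum>a<r. x a * v ((s + b + s) + 1 + a)))"
    by (intro sum.cong refl arg_cong2[where f = "(*)"] arg_cong[where f = v]) simp_all
  also have "\<dots> = (\<Sum>b<r. ?C b * (\<Sum>a<r. ?C a * v ((s + b + s) + a)))"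
  proof (intro sum.cong refl)
    fix b
    assume "b \<in> {..<r}"
    then have "(s + b + s) + r \<le> 2*k"
      using \<open>s + r \<le> k\<close> by auto
    then show "?C b * (\<Sum>a<r. x a * v ((s + b + s) + 1 + a)) =
        ?C b * (\<Sum>a<r. ?C a * v ((s + b + s) + a))"
      using fwd_rec_sum_Suc[OF rec \<open>1 \<le> r\<close>, of "s + b + s" x] by simp
  qed
  also have "\<dots> = (\<Sum>a<r. ?C a * (\<Sum>b<r. ?C b * v ((s + b + s) + a)))"
    by (rule sum_mult_sum_swap)
  also have "\<dots> = hankel_form v s r ?C"
    unfolding hankel_form_def sum_distrib_left by (intro sum.cong refl) (simp add: ac_simps)
  finally show ?thesis .
qed

lemma companion_eq_0_iff:
  assumes "1 \<le> r" "f 0 \<noteq> 0"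
  shows "(\<forall>j<r. companion r f x j = 0) \<longleftrightarrow> (\<forall>i<r. x i = 0)"
proof
  assume C: "\<forall>j<r. companion r f x j = 0"
  then have last: "x (r - 1) = 0"
    using assms by (auto simp: companion_def dest: spec[of _ 0])
  show "\<forall>i<r. x i = 0"
  proof (intro allI impI)
    fix i
    assume "i < r"
    show "x i = 0"
    proof (cases "i = r - 1")
      case False
      then show ?thesis
        using C[rule_format, of "i + 1"] \<open>i < r\<close> last by (simp add: companion_def)
    qed (use last in simp)
  qed
qed (auto simp: companion_def)

lemma companion_surj:
  assumes "1 \<le> r" "f 0 \<noteq> 0"
  obtains x where "\<And>j. j < r \<Longrightarrow> companion r f x j = y j"
proof
  define x where "x i = (if i = r - 1 then y 0 / f 0 else y (i + 1) - y 0 / f 0 * f (i + 1))" for i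
  fix j
  assume "j < r"
  then show "companion r f x j = y j"
    using assms by (cases j) (auto simp: companion_def x_def)
qed

lemma pos_def_hankel_block_Suc_iff:
  assumes rec: "fwd_rec k v r f" and "1 \<le> r" "f 0 \<noteq> 0" "s + r \<le> k"
  shows "pos_def r (hankel_block v (s + 1) r) \<longleftrightarrow> pos_def r (hankel_block v s r)"
  unfolding pos_def_hankel_block_iff
proof (intro iffI allI impI)
  fix y :: "nat \<Rightarrow> real"
  assume pd: "\<forall>x. (\<exists>i<r. x i \<noteq> 0) \<longrightarrow> 0 < hankel_form v (s + 1) r x"
    and "\<exists>i<r. y i \<noteq> 0"
  obtain x where x: "\<And>j. j < r \<Longrightarrow> companion r f x j = y j"
    using companion_surj[of r f y] \<open>1 \<le> r\<close> \<open>f 0 \<noteq> 0\<close> by blast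
  have "\<not> (\<forall>j<r. companion r f x j = 0)"
    using \<open>\<exists>i<r. y i \<noteq> 0\<close> x by auto
  then have "\<exists>i<r. x i \<noteq> 0"
    unfolding companion_eq_0_iff[of r f x, OF \<open>1 \<le> r\<close> \<open>f 0 \<noteq> 0\<close>] by simp
  then have "0 < hankel_form v (s + 1) r x"
    by (rule pd[rule_format])
  also have "\<dots> = hankel_form v s r (companion r f x)"
    by (rule hankel_form_Suc_companion[OF rec \<open>1 \<le> r\<close> \<open>s + r \<le> k\<close>])
  also have "\<dots> = hankel_form v s r y"
    using x by (rule hankel_form_cong)
  finally show "0 < hankel_form v s r y" .
next
  fix x :: "nat \<Rightarrow> real"
  assume pd: "\<forall>y. (\<exists>i<r. y i \<noteq> 0) \<longrightarrow> 0 < hankel_form v s r y" and "\<exists>i<r. x i \<noteq> 0"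
  have "\<exists>j<r. companion r f x j \<noteq> 0"
    using \<open>\<exists>i<r. x i \<noteq> 0\<close> companion_eq_0_iff[of r f x, OF \<open>1 \<le> r\<close> \<open>f 0 \<noteq> 0\<close>] by blast
  then have "0 < hankel_form v s r (companion r f x)"
    by (rule pd[rule_format])
  then show "0 < hankel_form v (s + 1) r x"
    using hankel_form_Suc_companion[OF rec \<open>1 \<le> r\<close> \<open>s + r \<le> k\<close>] by simp
qed

lemma pos_def_hankel_block_shift_iff:
  assumes rec: "fwd_rec k v r f" and "1 \<le> r" "f 0 \<noteq> 0" "s + r \<le> k + 1"
  shows "pos_def r (hankel_block v s r) \<longleftrightarrow> pos_def r (hankel_block v 0 r)"
  using \<open>s + r \<le> k + 1\<close>
proof (induction s)
  case (Suc s)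
  then show ?case
    using pos_def_hankel_block_Suc_iff[OF rec \<open>1 \<le> r\<close> \<open>f 0 \<noteq> 0\<close>, of s] by simp
qed simp

subsection \<open>Rank and the coefficients \<open>\<phi>\<close> and \<open>\<psi>\<close>\<close>

lemma sum_mult_unit_vector_minus:
  fixes g c :: "nat \<Rightarrow> real"
  assumes "i < n"
  shows "(\<Sum>b<n. g b * (if b < i then - c b else if b = i then 1 else 0)) = g i - (\<Sum>b<i. c b * g b)"
proof -
  have "(\<Sum>b<n. g b * (if b < i then - c b else if b = i then 1 else 0))
      = (\<Sum>b<Suc i. g b * (if b < i then - c b else if b = i then 1 else 0))"
    using assms by (intro sum.mono_neutral_right) auto
  also have "\<dots> = (\<Sum>b<i. g b * (if b < i then - c b else if b = i then 1 else 0)) + g i"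
    by simp
  also have "(\<Sum>b<i. g b * (if b < i then - c b else if b = i then 1 else 0)) =
      (\<Sum>b<i. - (c b * g b))"
    by (intro sum.cong refl) (simp add: mult.commute)
  finally show ?thesis
    by (simp add: sum_negf)
qed

lemma hrank_eqI:
  assumes pd: "pos_def r (hankel_block w 0 r)" and rec: "fwd_rec k w r f" and "r \<le> k"
  shows "hrank k w = r"
proof -
  have rec_at: "w (a + r) = (\<Sum>b<r. f b * w (a + b))" if "a \<le> k" for a
    using rec[unfolded fwd_rec_def, rule_format, of "a + r"] that \<open>r \<le> k\<close> by simp
  have span: "col_in_span k w r"
    unfolding col_in_span_def using rec_at by (auto simp: add.commute)
  define X :: "nat \<Rightarrow> real" where "X b = (if b < r then - f b else if b = r then 1 else 0)" for b
  have "det (hankel k w) = 0"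
    unfolding hankel_def
  proof (rule det_mat_eq_0I[of r "k + 1" X])
    show "r < k + 1" "X r \<noteq> 0"
      using \<open>r \<le> k\<close> by (auto simp: X_def)
    fix a
    assume "a < k + 1"
    then show "(\<Sum>b<k + 1. w (a + b) * X b) = 0"
      using rec_at[of a] \<open>r \<le> k\<close> unfolding X_def by (subst sum_mult_unit_vector_minus) auto
  qed
  moreover have "(LEAST i. col_in_span k w i) = r"
  proof (rule Least_equality)
    show "col_in_span k w r"
      by (rule span)
  next
    fix i
    assume "col_in_span k w i"
    then obtain d where d: "\<forall>l\<le>k. w (i + l) = (\<Sum>j<i. d j * w (j + l))"
      unfolding col_in_span_def by blast
    show "r \<le> i"
    proof (rule ccontr)
      assume "\<not> r \<le> i"
      define Y :: "nat \<Rightarrow> real" where "Y b = (if b < i then - d b else if b = i then 1 else 0)" for b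
      have "\<forall>b<r. Y b = 0"
      proof (rule pos_def_hankel_block_kernel[OF pd])
        fix a
        assume "a < r"
        then have "w (a + i) = (\<Sum>b<i. d b * w (a + b))"
          using d[rule_format, of a] \<open>r \<le> k\<close> by (simp add: add.commute)
        then show "(\<Sum>b<r. w (0 + a + 0 + b) * Y b) = 0"
          using \<open>\<not> r \<le> i\<close> unfolding Y_def by (subst sum_mult_unit_vector_minus) auto
      qed
      then have "Y i = 0"
        using \<open>\<not> r \<le> i\<close> by simp
      then show False
        by (simp add: Y_def)
    qed
  qed
  ultimately show ?thesis
    by (simp add: hrank_def)
qed

lemma phi_beyond_rank: "hrank k v \<le> j \<Longrightarrow> phi k v j = 0"
  by (simp add: phi_def Let_def)

lemma psi_beyond_rank: "hrank k (rev_seq k v) \<le> j \<Longrightarrow> psi k v j = 0"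
  by (simp add: psi_def Let_def)

lemma phi_eqI:
  assumes rank: "hrank k v = r" and pd: "pos_def r (hankel_block v 0 r)"
    and rec: "fwd_rec k v r f" and "r \<le> k" "j < r"
  shows "phi k v j = f j"
proof (rule pos_def_hankel_block_solution_unique[OF pd _ _ \<open>j < r\<close>])
  let ?B = "the (mat_inverse (hankel_block v 0 r))"
  fix a
  assume "a < r"
  have "phi k v i = (\<Sum>l<r. ?B $$ (i,l) * v (r + l))" if "i < r" for i
    using that rank by (simp add: phi_def hankel_ul_eq_block Let_def)
  then have "(\<Sum>i<r. v (0 + a + 0 + i) * phi k v i) =
      (\<Sum>i<r. v (0 + a + 0 + i) * (\<Sum>l<r. ?B $$ (i,l) * v (r + l)))"
    by (intro sum.cong refl) simp
  also have "\<dots> = v (r + a)"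
    by (rule pos_def_hankel_block_mat_inverse_solves[OF pd \<open>a < r\<close>])
  finally show "(\<Sum>i<r. v (0 + a + 0 + i) * phi k v i) = v (r + a)" .
  show "(\<Sum>i<r. v (0 + a + 0 + i) * f i) = v (r + a)"
    using rec[unfolded fwd_rec_def, rule_format, of "r + a"] \<open>a < r\<close> \<open>r \<le> k\<close>
    by (simp add: mult.commute)
qed

lemma psi_eqI:
  assumes rank: "hrank k (rev_seq k v) = r" and pd: "pos_def r (hankel_block v (k + 1 - r) r)"
    and rec: "bwd_rec k v r g" and "r \<le> k" "j < r"
  shows "psi k v j = g j"
proof (rule pos_def_hankel_block_solution_unique[OF pd _ _ \<open>j < r\<close>])
  let ?s = "k + 1 - r"
  let ?B = "the (mat_inverse (hankel_block v ?s r))"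
  fix a
  assume "a < r"
  have "psi k v i = (\<Sum>l<r. ?B $$ (i,l) * v (2*k + 1 - 2*r + l))" if "i < r" for i
    using that rank by (simp add: psi_def hankel_lr_eq_block Let_def)
  then have "(\<Sum>i<r. v (?s + a + ?s + i) * psi k v i) =
      (\<Sum>i<r. v (?s + a + ?s + i) * (\<Sum>l<r. ?B $$ (i,l) * v (2*k + 1 - 2*r + l)))"
    by (intro sum.cong refl) simp
  also have "\<dots> = v (2*k + 1 - 2*r + a)"
    by (rule pos_def_hankel_block_mat_inverse_solves[OF pd \<open>a < r\<close>])
  finally show "(\<Sum>i<r. v (?s + a + ?s + i) * psi k v i) = v (2*k + 1 - 2*r + a)" .
  have "2*k + 1 - 2*r + a \<le> 2*k - r"
    using \<open>a < r\<close> \<open>r \<le> k\<close> by arith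
  then have "v (2*k + 1 - 2*r + a) = (\<Sum>i<r. g i * v (2*k + 1 - 2*r + a + 1 + i))"
    using rec unfolding bwd_rec_def by blast
  also have "\<dots> = (\<Sum>i<r. v (?s + a + ?s + i) * g i)"
  proof (intro sum.cong refl)
    fix i
    have index: "2*k + 1 - 2*r + a + 1 + i = ?s + a + ?s + i"
      using \<open>r \<le> k\<close> by arith
    show "g i * v (2*k + 1 - 2*r + a + 1 + i) = v (?s + a + ?s + i) * g i"
      by (subst index) (rule mult.commute)
  qed
  finally show "(\<Sum>i<r. v (?s + a + ?s + i) * g i) = v (2*k + 1 - 2*r + a)" ..
qed

lemma prg_iff:
  assumes "hrank k v = r" "r \<le> k"
  shows "prg k v \<longleftrightarrow> pos_def r (hankel_block v 0 r) \<and> fwd_rec k v r (phi k v)"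
  using assms by (simp add: prg_def fwd_rec_def hankel_ul_eq_block Let_def)

lemma nrg_iff:
  assumes "hrank k (rev_seq k v) = r" "r \<le> k"
  shows "nrg k v \<longleftrightarrow> pos_def r (hankel_block v (k + 1 - r) r) \<and> bwd_rec k v r (psi k v)"
proof -
  have "(\<forall>j. j \<le> 2*k - r \<longrightarrow> v (2*k - r - j) = (\<Sum>i<r. psi k v i * v (2*k - r + 1 - j + i)))
      \<longleftrightarrow> bwd_rec k v r (psi k v)"
    unfolding bwd_rec_def
  proof (intro iffI allI impI)
    fix m
    assume nrg_rec: "\<forall>j. j \<le> 2*k - r \<longrightarrow>
        v (2*k - r - j) = (\<Sum>i<r. psi k v i * v (2*k - r + 1 - j + i))"
      and "m \<le> 2*k - r"
    then have "2*k - r - (2*k - r - m) = m" "2*k - r + 1 - (2*k - r - m) = m + 1"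
      by arith+
    with nrg_rec[rule_format, of "2*k - r - m"] show "v m = (\<Sum>i<r. psi k v i * v (m + 1 + i))"
      by (simp only: diff_le_self)
  next
    fix j
    assume bwd: "\<forall>m. m \<le> 2*k - r \<longrightarrow> v m = (\<Sum>i<r. psi k v i * v (m + 1 + i))"
      and "j \<le> 2*k - r"
    then have "2*k - r - j + 1 = 2*k - r + 1 - j"
      by arith
    with bwd[rule_format, of "2*k - r - j"]
    show "v (2*k - r - j) = (\<Sum>i<r. psi k v i * v (2*k - r + 1 - j + i))"
      by (simp only: diff_le_self)
  qed
  with assms show ?thesis
    by (simp add: nrg_def hankel_lr_eq_block Let_def)
qed

lemma singular_seqD:
  assumes "singular_seq k v"
  shows "hrank k v \<le> k" "det (hankel k v) = 0"
  using assms unfolding singular_seq_def hrank_def by (auto split: if_splits)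

lemma hrank_rev_le_if_nrg:
  assumes "nrg k v" "det (hankel k v) = 0"
  shows "hrank k (rev_seq k v) \<le> k"
proof (rule ccontr)
  let ?r = "hrank k (rev_seq k v)"
  assume "\<not> ?r \<le> k"
  then have "pos_def ?r (hankel_block v 0 ?r)"
    using assms(1) by (simp add: nrg_def hankel_lr_eq_block Let_def)
  then have "pos_def (k + 1) (hankel_block v 0 (k + 1))"
    using pos_def_hankel_block_sub[of ?r v 0 0 "k + 1"] \<open>\<not> ?r \<le> k\<close> by simp
  then show False
    using pos_def_det_nonzero assms(2) by (simp add: hankel_eq_block)
qed

subsection \<open>Recursive generation in both directions\<close>

lemma nrg_if_prg_phi0:
  assumes prg: "prg k v" and phi0: "phi k v 0 \<noteq> 0" and sing: "singular_seq k v"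
  shows "nrg k v" "hrank k (rev_seq k v) = hrank k v"
    "\<And>i. i + 1 < hrank k v \<Longrightarrow> psi k v i = - phi k v (i + 1) / phi k v 0"
    "psi k v (hrank k v - 1) = 1 / phi k v 0"
proof -
  define r where "r = hrank k v"
  have "r \<le> k"
    using singular_seqD[OF sing] by (simp add: r_def)
  then have pd: "pos_def r (hankel_block v 0 r)" and rec: "fwd_rec k v r (phi k v)"
    using prg prg_iff[OF r_def[symmetric]] by auto
  have "r \<noteq> 0"
    using phi0 phi_beyond_rank[of k v 0] by (auto simp: r_def)
  then have "1 \<le> r"
    by simp
  define g where "g i = (if i + 1 < r then - phi k v (i + 1) / phi k v 0 else 1 / phi k v 0)" for i
  have pd': "pos_def r (hankel_block v (k + 1 - r) r)"
    using pos_def_hankel_block_shift_iff[OF rec \<open>1 \<le> r\<close> phi0, of "k + 1 - r"] pd \<open>r \<le> k\<close> by simp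
  have brec: "bwd_rec k v r g"
    using fwd_rec_imp_bwd_rec[OF rec \<open>1 \<le> r\<close> phi0 \<open>r \<le> k\<close>] unfolding g_def .
  have rank': "hrank k (rev_seq k v) = r"
    using hrank_eqI[OF pos_def_hankel_block_rev[OF pd'] bwd_rec_imp_fwd_rec_rev[OF brec]] \<open>r \<le> k\<close>
    by simp
  have psi: "psi k v j = g j" if "j < r" for j
    using psi_eqI[OF rank' pd' brec \<open>r \<le> k\<close> that] .
  then have "bwd_rec k v r (psi k v)"
    using brec bwd_rec_cong by blast
  then show "nrg k v"
    using nrg_iff[OF rank' \<open>r \<le> k\<close>] pd' by simp
  show "hrank k (rev_seq k v) = hrank k v"
    using rank' by (simp add: r_def)
  show "psi k v i = - phi k v (i + 1) / phi k v 0" if "i + 1 < hrank k v" for i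
    using psi[of i] that by (simp add: g_def r_def)
  show "psi k v (hrank k v - 1) = 1 / phi k v 0"
    using psi[of "r - 1"] \<open>1 \<le> r\<close> by (simp add: g_def r_def)
qed

lemma prg_if_nrg_psi_last:
  assumes nrg: "nrg k v" and psi_last: "psi k v (hrank k (rev_seq k v) - 1) \<noteq> 0"
    and sing: "singular_seq k v"
  shows "prg k v" "phi k v 0 \<noteq> 0"
proof -
  define r where "r = hrank k (rev_seq k v)"
  have "r \<le> k"
    using hrank_rev_le_if_nrg[OF nrg singular_seqD(2)[OF sing]] by (simp add: r_def)
  then have pd: "pos_def r (hankel_block v (k + 1 - r) r)" and brec: "bwd_rec k v r (psi k v)"
    using nrg nrg_iff[OF r_def[symmetric]] by auto
  have "psi k v (r - 1) \<noteq> 0"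
    using psi_last by (simp add: r_def)
  then have "1 \<le> r"
    using psi_beyond_rank[of k v "r - 1"] unfolding r_def[symmetric] by (cases r) simp_all
  define f where
    "f i = (if i = 0 then 1 / psi k v (r - 1) else - psi k v (i - 1) / psi k v (r - 1))" for i
  have rec: "fwd_rec k v r f"
    using bwd_rec_imp_fwd_rec[OF brec \<open>1 \<le> r\<close> \<open>psi k v (r - 1) \<noteq> 0\<close> \<open>r \<le> k\<close>] unfolding f_def .
  have "f 0 \<noteq> 0"
    using \<open>psi k v (r - 1) \<noteq> 0\<close> by (simp add: f_def)
  have pd0: "pos_def r (hankel_block v 0 r)"
    using pos_def_hankel_block_shift_iff[OF rec \<open>1 \<le> r\<close> \<open>f 0 \<noteq> 0\<close>, of "k + 1 - r"] pd \<open>r \<le> k\<close>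
    by simp
  have rank: "hrank k v = r"
    using hrank_eqI[OF pd0 rec \<open>r \<le> k\<close>] .
  have phi: "phi k v j = f j" if "j < r" for j
    using phi_eqI[OF rank pd0 rec \<open>r \<le> k\<close> that] .
  then show "prg k v"
    using prg_iff[OF rank \<open>r \<le> k\<close>] pd0 rec fwd_rec_cong by blast
  show "phi k v 0 \<noteq> 0"
    using phi[of 0] \<open>1 \<le> r\<close> \<open>f 0 \<noteq> 0\<close> by simp
qed

lemma phi0_nonzero_if_rg:
  assumes prg: "prg k v" and nrg: "nrg k v" and sing: "singular_seq k v"
    and nonzero: "\<exists>j\<le>2*k. v j \<noteq> 0"
  shows "phi k v 0 \<noteq> 0"
proof
  assume phi0: "phi k v 0 = 0"
  define r where "r = hrank k v"
  define r' where "r' = hrank k (rev_seq k v)"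
  have "r \<le> k" "r' \<le> k"
    using singular_seqD[OF sing] hrank_rev_le_if_nrg[OF nrg] by (simp_all add: r_def r'_def)
  then have pd: "pos_def r (hankel_block v 0 r)" and rec: "fwd_rec k v r (phi k v)"
    and pd': "pos_def r' (hankel_block v (k + 1 - r') r')" and brec: "bwd_rec k v r' (psi k v)"
    using prg prg_iff[OF r_def[symmetric]] nrg nrg_iff[OF r'_def[symmetric]] by auto
  obtain r0 where r0: "r = Suc r0"
  proof (cases r)
    case 0
    then show ?thesis
      using rec nonzero by (auto simp: fwd_rec_def)
  qed
  show False
  proof (cases "r \<le> r'")
    case True
    let ?s = "k + 1 - r"
    have "pos_def (Suc r0) (hankel_block v ?s (Suc r0))"
      using pos_def_hankel_block_sub[OF pd', of "r' - r" r] True r0 \<open>r' \<le> k\<close> by simp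
    moreover have "v (?s + a + ?s + r0) = (\<Sum>b<r0. phi k v (Suc b) * v (?s + a + ?s + b))"
      if "a \<le> r0" for a
    proof -
      let ?j = "?s + a + ?s + r0"
      have "r \<le> ?j \<and> ?j \<le> 2*k"
        using that r0 \<open>r \<le> k\<close> by arith
      then have "v ?j = (\<Sum>i<Suc r0. phi k v i * v (?j - r + i))"
        using rec r0 unfolding fwd_rec_def by blast
      also have "\<dots> = (\<Sum>b<r0. phi k v (Suc b) * v (?j - r + Suc b))"
        using phi0 by (simp add: sum.lessThan_Suc_shift del: sum.lessThan_Suc)
      also have "\<dots> = (\<Sum>b<r0. phi k v (Suc b) * v (?s + a + ?s + b))"
      proof (intro sum.cong refl)
        fix b
        have index: "?j - r + Suc b = ?s + a + ?s + b"
          using r0 \<open>r \<le> k\<close> by arith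
        show "phi k v (Suc b) * v (?j - r + Suc b) = phi k v (Suc b) * v (?s + a + ?s + b)"
          by (simp only: index)
      qed
      finally show ?thesis .
    qed
    ultimately show False
      using not_pos_def_hankel_block_if_fwd_rec[where c = "\<lambda>b. phi k v (Suc b)"] by blast
  next
    case False
    then have "pos_def (Suc r') (hankel_block v 0 (Suc r'))"
      using pos_def_hankel_block_sub[OF pd, of 0 "Suc r'"] by simp
    moreover have "v (0 + a + 0) = (\<Sum>b<r'. psi k v b * v (0 + a + 0 + 1 + b))" if "a \<le> r'" for a
      using brec that \<open>r' \<le> k\<close> unfolding bwd_rec_def by auto
    ultimately show False
      using not_pos_def_hankel_block_if_bwd_rec[where c = "psi k v"] by blast
  qed
qed

theorem proposition2p3:
  fixes k :: nat and v :: "nat \<Rightarrow> real"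
  assumes sing: "singular_seq k v"
    and nonzero: "\<exists>j\<le>2*k. v j \<noteq> 0"
  defines "r' \<equiv> hrank k (rev_seq k v)"
  shows "((prg k v \<and> phi k v 0 \<noteq> 0) \<longleftrightarrow> (nrg k v \<and> psi k v (r' - 1) \<noteq> 0))
       \<and> ((nrg k v \<and> psi k v (r' - 1) \<noteq> 0) \<longleftrightarrow> rg k v)
       \<and> (rg k v \<longleftrightarrow>
           (rg k v \<and> hrank k v = r' \<and> phi k v 0 \<noteq> 0 \<and>
            (\<forall>i. i + 2 \<le> hrank k v \<longrightarrow> psi k v i = - phi k v (i+1) / phi k v 0) \<and>
            psi k v (hrank k v - 1) = 1 / phi k v 0))"
proof -
  have one_imp_four: "nrg k v \<and> hrank k v = r' \<and>
      (\<forall>i. i + 2 \<le> hrank k v \<longrightarrow> psi k v i = - phi k v (i+1) / phi k v 0) \<and>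
      psi k v (hrank k v - 1) = 1 / phi k v 0"
    if "prg k v" "phi k v 0 \<noteq> 0"
    using nrg_if_prg_phi0[OF that sing] unfolding r'_def by auto
  have two_imp_one: "prg k v \<and> phi k v 0 \<noteq> 0" if "nrg k v" "psi k v (r' - 1) \<noteq> 0"
    using prg_if_nrg_psi_last[OF that[unfolded r'_def] sing] by blast
  have three_imp_one: "phi k v 0 \<noteq> 0" if "rg k v"
    using phi0_nonzero_if_rg that sing nonzero unfolding rg_def by blast
  show ?thesis
    using one_imp_four two_imp_one three_imp_one unfolding rg_def by auto
qed

end
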